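(* Let $(X,\mathbf R)$ be a symmetric association scheme with $D$ classes, metric with respect to $A_0,\dots,A_D$. Fix $x\in X$, let $T=T(x)$, and let $t\in\{1,\dots,D\}$. For $\chi\in V$ the following are equivalent: (i) $\chi$ is orthogonal to every irreducible $T$-module $W\subseteq V$ with $1\le r(W)\le t$; (ii) $F\chi$ is a relative $t$-codesign with respect to $x$ for every $F\in T$. Moreover, if every irreducible $T$-module in $V$ with endpoint at most $t$ is thin, then the weaker condition "$A_\ell\chi$ is a relative $t$-codesign with respect to $x$ for every $0\le\ell\le D$" already implies (i) (and hence (ii)).
   Context: $(X,\mathbf R)$ is a symmetric association scheme with associate matrices $A_0=I,\dots,A_D$, Bose–Mesner algebra $M$, primitive idempotents $E_0=|X|^{-1}J,\dots,E_D$. Metric with respect to $A_0,\dots,A_D$ means $(X,R_1)$ is a distance-regular graph with $R_i$ its distance-$i$ relation. $V=\mathbb C^X$ with standard basis $\{\hat y\}$ and standard Hermitian inner product. For $x\in X$: $E_i^*(x)$ is diagonal with $(E_i^*(x))_{yy}=(A_i)_{xy}$; $A_i^*(x)$ is diagonal with $(A_i^*(x))_{yy}=|X|(E_i)_{xy}$; the Terwilliger algebra $T(x)$ is the subalgebra of $\mathrm{Mat}_X(\mathbb C)$ generated by $M$ and the $A_i^*(x)$ (equivalently the $E_i^*(x)$). For an irreducible $T(x)$-module $W\subseteq V$, its endpoint is $r(W)=\min\{i:E_i^*(x)W\ne0\}$, and $W$ is thin if $\dim E_i^*(x)W\le 1$ for all $i$. A vector $\psi$ is a relative $t$-codesign with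 respect to $x$ if $E_i^*(x)\psi$ and $A_i\hat x$ are linearly dependent for all $1\le i\le t$. *)

theory Defs
  imports Complex_Main
begin

text \<open>The vertex set X is the (finite) universe of the type 'a.
  Matrices indexed by X are functions 'a => 'a => complex, vectors in V = C^X
  are functions 'a => complex.\<close>

definition mmult :: "('a::finite \<Rightarrow> 'a \<Rightarrow> complex) \<Rightarrow> ('a \<Rightarrow> 'a \<Rightarrow> complex) \<Rightarrow> 'a \<Rightarrow> 'a \<Rightarrow> complex" where
  "mmult A B = (\<lambda>y z. \<Sum>w\<in>UNIV. A y w * B w z)"

definition mvmult :: "('a::finite \<Rightarrow> 'a \<Rightarrow> complex) \<Rightarrow> ('a \<Rightarrow> complex) \<Rightarrow> 'a \<Rightarrow> complex" where
  "mvmult A v = (\<lambda>y. \<Sum>z\<in>UNIV. A y z * v z)"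

definition basis_vec :: "'a \<Rightarrow> 'a \<Rightarrow> complex" where
  "basis_vec x = (\<lambda>y. if y = x then 1 else 0)"

definition adj :: "('a \<times> 'a) set \<Rightarrow> 'a \<Rightarrow> 'a \<Rightarrow> complex" where
  "adj S = (\<lambda>y z. if (y, z) \<in> S then 1 else 0)"

definition dual_idem :: "(nat \<Rightarrow> ('a \<times> 'a) set) \<Rightarrow> 'a \<Rightarrow> nat \<Rightarrow> 'a \<Rightarrow> 'a \<Rightarrow> complex" where
  "dual_idem R x i = (\<lambda>y z. if y = z then adj (R i) x y else 0)"

definition symmetric_association_scheme :: "(nat \<Rightarrow> ('a::finite \<times> 'a) set) \<Rightarrow> nat \<Rightarrow> bool" where
  "symmetric_association_scheme R D \<longleftrightarrow>
     R 0 = Id \<and>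
     (\<forall>i\<le>D. R i \<noteq> {}) \<and>
     (\<forall>y z. \<exists>!i. i \<le> D \<and> (y, z) \<in> R i) \<and>
     (\<forall>i\<le>D. (R i)\<inverse> = R i) \<and>
     (\<forall>i\<le>D. \<forall>j\<le>D. \<forall>k\<le>D. \<exists>p::nat. \<forall>y z. (y, z) \<in> R k \<longrightarrow>
         card {w. (y, w) \<in> R i \<and> (w, z) \<in> R j} = p)"

text \<open>Metric: R i is the distance-i relation of the graph (X, R 1).\<close>
definition metric_scheme :: "(nat \<Rightarrow> ('a \<times> 'a) set) \<Rightarrow> nat \<Rightarrow> bool" where
  "metric_scheme R D \<longleftrightarrow>
     (\<forall>i\<le>D. \<forall>y z. (y, z) \<in> R i \<longleftrightarrow>
        ((y, z) \<in> (R 1) ^^ i \<and> (\<forall>j<i. (y, z) \<notin> (R 1) ^^ j)))"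

inductive_set terwilliger_algebra ::
  "(nat \<Rightarrow> ('a::finite \<times> 'a) set) \<Rightarrow> nat \<Rightarrow> 'a \<Rightarrow> ('a \<Rightarrow> 'a \<Rightarrow> complex) set"
  for R D x where
  gen_A: "i \<le> D \<Longrightarrow> adj (R i) \<in> terwilliger_algebra R D x"
| gen_Estar: "i \<le> D \<Longrightarrow> dual_idem R x i \<in> terwilliger_algebra R D x"
| add: "F \<in> terwilliger_algebra R D x \<Longrightarrow> G \<in> terwilliger_algebra R D x \<Longrightarrow>
        (\<lambda>y z. F y z + G y z) \<in> terwilliger_algebra R D x"
| smult: "F \<in> terwilliger_algebra R D x \<Longrightarrow> (\<lambda>y z. c * F y z) \<in> terwilliger_algebra R D x"
| mult: "F \<in> terwilliger_algebra R D x \<Longrightarrow> G \<in> terwilliger_algebra R D x \<Longrightarrow>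
        mmult F G \<in> terwilliger_algebra R D x"

definition csubspace :: "('a \<Rightarrow> complex) set \<Rightarrow> bool" where
  "csubspace W \<longleftrightarrow> (\<lambda>_. 0) \<in> W \<and> (\<forall>u\<in>W. \<forall>v\<in>W. (\<lambda>y. u y + v y) \<in> W) \<and>
     (\<forall>c. \<forall>u\<in>W. (\<lambda>y. c * u y) \<in> W)"

definition T_module :: "(nat \<Rightarrow> ('a::finite \<times> 'a) set) \<Rightarrow> nat \<Rightarrow> 'a \<Rightarrow> ('a \<Rightarrow> complex) set \<Rightarrow> bool" where
  "T_module R D x W \<longleftrightarrow> csubspace W \<and>
     (\<forall>F\<in>terwilliger_algebra R D x. \<forall>w\<in>W. mvmult F w \<in> W)"

definition irreducible_T_module :: "(nat \<Rightarrow> ('a::finite \<times> 'a) set) \<Rightarrow> nat \<Rightarrow> 'a \<Rightarrow> ('a \<Rightarrow> complex) set \<Rightarrow> bool" where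
  "irreducible_T_module R D x W \<longleftrightarrow> T_module R D x W \<and> W \<noteq> {\<lambda>_. 0} \<and>
     (\<forall>U. T_module R D x U \<and> U \<subseteq> W \<longrightarrow> U = {\<lambda>_. 0} \<or> U = W)"

definition endpoint :: "(nat \<Rightarrow> ('a::finite \<times> 'a) set) \<Rightarrow> nat \<Rightarrow> 'a \<Rightarrow> ('a \<Rightarrow> complex) set \<Rightarrow> nat" where
  "endpoint R D x W = (LEAST i. i \<le> D \<and> (\<exists>w\<in>W. mvmult (dual_idem R x i) w \<noteq> (\<lambda>_. 0)))"

text \<open>Thin: dim E_i^*(x) W \<le> 1, i.e. E_i^*(x) W lies in the span of a single vector.\<close>
definition thin :: "(nat \<Rightarrow> ('a::finite \<times> 'a) set) \<Rightarrow> nat \<Rightarrow> 'a \<Rightarrow> ('a \<Rightarrow> complex) set \<Rightarrow> bool" where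
  "thin R D x W \<longleftrightarrow> (\<forall>i\<le>D. \<exists>v. \<forall>w\<in>W. \<exists>c. mvmult (dual_idem R x i) w = (\<lambda>y. c * v y))"

definition orthogonal_to :: "('a::finite \<Rightarrow> complex) \<Rightarrow> ('a \<Rightarrow> complex) set \<Rightarrow> bool" where
  "orthogonal_to chi W \<longleftrightarrow> (\<forall>w\<in>W. (\<Sum>y\<in>UNIV. w y * cnj (chi y)) = 0)"

definition lin_dependent2 :: "('a \<Rightarrow> complex) \<Rightarrow> ('a \<Rightarrow> complex) \<Rightarrow> bool" where
  "lin_dependent2 u v \<longleftrightarrow> (\<exists>a b. (a \<noteq> 0 \<or> b \<noteq> 0) \<and> (\<forall>y. a * u y + b * v y = 0))"

definition relative_codesign :: "(nat \<Rightarrow> ('a::finite \<times> 'a) set) \<Rightarrow> 'a \<Rightarrow> nat \<Rightarrow> ('a \<Rightarrow> complex) \<Rightarrow> bool" where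
  "relative_codesign R x t \<psi> \<longleftrightarrow>
     (\<forall>i. 1 \<le> i \<and> i \<le> t \<longrightarrow>
        lin_dependent2 (mvmult (dual_idem R x i) \<psi>) (mvmult (adj (R i)) (basis_vec x)))"

end

theory Submission
  imports Defs "HOL-Analysis.Analysis"
begin

text \<open>
  (ii) \<open>\<Longrightarrow>\<close> (i): let \<open>W\<close> be irreducible with endpoint \<open>r \<in> [1, t]\<close> and \<open>0 \<noteq> v \<in> E\<^sup>*\<^sub>r W\<close>. The
  vectors of \<open>W\<close> whose whole \<open>T\<close>-orbit is orthogonal to \<open>\<chi>\<close> form a submodule. It contains \<open>v\<close>:
  \<open>v\<close> lives on layer \<open>r\<close>, is orthogonal to \<open>A\<^sub>r x\<close> because \<open>W\<close> vanishes at \<open>x\<close>, and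
  \<open>E\<^sup>*\<^sub>r F\<^sup>* \<chi>\<close> is a multiple of \<open>A\<^sub>r x\<close> by (ii). Irreducibility makes this submodule all of \<open>W\<close>.

  (i) \<open>\<Longrightarrow>\<close> (ii): \<open>\<psi> = F \<chi>\<close> again satisfies (i), since \<open>T\<close> is closed under adjoints. The component
  \<open>u\<close> of \<open>E\<^sup>*\<^sub>i \<psi>\<close> orthogonal to \<open>A\<^sub>i x\<close> generates a \<open>T\<close>-module vanishing at \<open>x\<close> (the adjoint of \<open>T\<close> maps
  \<open>\<delta>\<^sub>x\<close> to vectors that are constant on layers), and \<open>u\<close> lives on layers \<open>\<le> t\<close>. Splitting that module
  orthogonally into irreducibles, every component of \<open>u\<close> lies in a module with endpoint in
  \<open>[1, t]\<close>, so \<open>\<langle>u, \<psi>\<rangle> = 0\<close>; as \<open>\<langle>u, \<psi>\<rangle> = \<langle>u, u\<rangle>\<close>, \<open>u = 0\<close>.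

  Thin case: a thin irreducible \<open>W\<close> is spanned by the vectors \<open>A\<^sub>1\<^sup>k v\<close>, and
  \<open>\<langle>A\<^sub>1\<^sup>k v, \<chi>\<rangle> = \<langle>v, A\<^sub>1\<^sup>k \<chi>\<rangle> = 0\<close> because \<open>A\<^sub>1\<^sup>k \<chi>\<close> is a combination of the codesigns \<open>A\<^sub>l \<chi>\<close>.
\<close>

section \<open>Vectors and matrices on a finite type\<close>

definition cinner :: "('a::finite \<Rightarrow> complex) \<Rightarrow> ('a \<Rightarrow> complex) \<Rightarrow> complex" where
  "cinner u v = (\<Sum>y\<in>UNIV. u y * cnj (v y))"

definition mat_adjoint :: "('a \<Rightarrow> 'a \<Rightarrow> complex) \<Rightarrow> 'a \<Rightarrow> 'a \<Rightarrow> complex" where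
  "mat_adjoint F = (\<lambda>y z. cnj (F z y))"

definition id_mat :: "'a \<Rightarrow> 'a \<Rightarrow> complex" where
  "id_mat = (\<lambda>y z. if y = z then 1 else 0)"

definition cspan :: "'b set \<Rightarrow> ('b \<Rightarrow> 'a \<Rightarrow> complex) \<Rightarrow> ('a \<Rightarrow> complex) set" where
  "cspan I f = {\<lambda>y. \<Sum>k\<in>I. c k * f k y | c. True}"

lemma mvmult_mmult: "mvmult (mmult F G) v = mvmult F (mvmult G v)"
proof (rule ext)
  fix y
  have "mvmult (mmult F G) v y = (\<Sum>z\<in>UNIV. \<Sum>w\<in>UNIV. F y w * G w z * v z)"
    unfolding mvmult_def mmult_def by (simp add: sum_distrib_right)
  also have "\<dots> = (\<Sum>w\<in>UNIV. \<Sum>z\<in>UNIV. F y w * G w z * v z)" by (rule sum.swap)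
  also have "\<dots> = mvmult F (mvmult G v) y"
    unfolding mvmult_def by (simp add: sum_distrib_left mult.assoc)
  finally show "mvmult (mmult F G) v y = mvmult F (mvmult G v) y" .
qed

lemma mvmult_id_mat [simp]: "mvmult id_mat u = u"
  unfolding mvmult_def id_mat_def by (simp add: of_bool_def[symmetric])

lemma mvmult_add_right: "mvmult F (\<lambda>y. u y + v y) = (\<lambda>y. mvmult F u y + mvmult F v y)"
  unfolding mvmult_def by (auto simp: distrib_left sum.distrib)

lemma mvmult_scale_right: "mvmult F (\<lambda>y. c * u y) = (\<lambda>y. c * mvmult F u y)"
  unfolding mvmult_def by (auto simp: sum_distrib_left mult_ac)

lemma mvmult_zero_right [simp]: "mvmult F (\<lambda>_. 0) = (\<lambda>_. 0)"
  unfolding mvmult_def by auto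

lemma mvmult_sum_right: "mvmult F (\<lambda>y. \<Sum>k\<in>I. f k y) = (\<lambda>y. \<Sum>k\<in>I. mvmult F (f k) y)"
  unfolding mvmult_def by (auto simp: sum_distrib_left intro: sum.swap)

lemma mvmult_add_left: "mvmult (\<lambda>y z. F y z + G y z) v = (\<lambda>y. mvmult F v y + mvmult G v y)"
  unfolding mvmult_def by (auto simp: distrib_right sum.distrib)

lemma mvmult_scale_left: "mvmult (\<lambda>y z. c * F y z) v = (\<lambda>y. c * mvmult F v y)"
  unfolding mvmult_def by (auto simp: sum_distrib_left mult_ac)

lemma mvmult_sum_left: "mvmult (\<lambda>y z. \<Sum>k\<in>I. f k y z) v = (\<lambda>y. \<Sum>k\<in>I. mvmult (f k) v y)"
  unfolding mvmult_def by (auto simp: sum_distrib_right intro: sum.swap)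

lemma adj_apply: "mvmult (adj S) u y = (\<Sum>z\<in>UNIV. if (y, z) \<in> S then u z else 0)"
  unfolding mvmult_def adj_def by (rule sum.cong) auto

lemma mat_adjoint_mmult: "mat_adjoint (mmult F G) = mmult (mat_adjoint G) (mat_adjoint F)"
  unfolding mat_adjoint_def mmult_def by (auto simp: mult.commute intro!: ext)

lemma mat_adjoint_mat_adjoint [simp]: "mat_adjoint (mat_adjoint F) = F"
  unfolding mat_adjoint_def by simp

lemma cinner_mvmult_left: "cinner (mvmult F u) v = cinner u (mvmult (mat_adjoint F) v)"
proof -
  have "cinner (mvmult F u) v = (\<Sum>y\<in>UNIV. \<Sum>z\<in>UNIV. F y z * u z * cnj (v y))"
    unfolding cinner_def mvmult_def by (simp add: sum_distrib_right)
  also have "\<dots> = (\<Sum>z\<in>UNIV. \<Sum>y\<in>UNIV. F y z * u z * cnj (v y))" by (rule sum.swap)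
  also have "\<dots> = cinner u (mvmult (mat_adjoint F) v)"
    unfolding cinner_def mvmult_def mat_adjoint_def by (simp add: sum_distrib_left mult_ac)
  finally show ?thesis .
qed

lemma mvmult_eq_cinner_basis_vec: "mvmult G u z = cinner u (mvmult (mat_adjoint G) (basis_vec z))"
proof -
  have col: "mvmult (mat_adjoint G) (basis_vec z) = (\<lambda>w. cnj (G z w))"
    unfolding mvmult_def mat_adjoint_def basis_vec_def by (simp add: of_bool_def[symmetric])
  show ?thesis unfolding col by (simp add: cinner_def mvmult_def mult.commute)
qed

lemma cinner_add_left: "cinner (\<lambda>y. u y + v y) w = cinner u w + cinner v w"
  unfolding cinner_def by (simp add: distrib_right sum.distrib)

lemma cinner_diff_left: "cinner (\<lambda>y. u y - v y) w = cinner u w - cinner v w"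
  unfolding cinner_def by (simp add: left_diff_distrib sum_subtractf)

lemma cinner_scale_left: "cinner (\<lambda>y. c * u y) w = c * cinner u w"
  unfolding cinner_def by (simp add: sum_distrib_left mult_ac)

lemma cinner_zero_left [simp]: "cinner (\<lambda>_. 0) w = 0"
  unfolding cinner_def by simp

lemma cinner_add_right: "cinner u (\<lambda>y. v y + w y) = cinner u v + cinner u w"
  unfolding cinner_def by (simp add: distrib_left sum.distrib)

lemma cinner_diff_right: "cinner u (\<lambda>y. v y - w y) = cinner u v - cinner u w"
  unfolding cinner_def by (simp add: right_diff_distrib sum_subtractf)

lemma cinner_scale_right: "cinner u (\<lambda>y. c * w y) = cnj c * cinner u w"
  unfolding cinner_def by (simp add: sum_distrib_left mult_ac)

lemma cinner_zero_right [simp]: "cinner u (\<lambda>_. 0) = 0"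
  unfolding cinner_def by simp

lemma cinner_self_eq_0_iff: "cinner u u = 0 \<longleftrightarrow> u = (\<lambda>_. 0)"
proof
  assume "cinner u u = 0"
  then have "complex_of_real (\<Sum>y\<in>UNIV. (cmod (u y))\<^sup>2) = 0"
    unfolding cinner_def complex_norm_square[symmetric] of_real_sum by simp
  then have "(\<Sum>y\<in>UNIV. (cmod (u y))\<^sup>2) = 0" by (simp only: of_real_eq_0_iff)
  then show "u = (\<lambda>_. 0)" by (simp add: sum_nonneg_eq_0_iff fun_eq_iff)
qed simp

lemma csubspace_zero: "csubspace U \<Longrightarrow> (\<lambda>_. 0) \<in> U"
  unfolding csubspace_def by blast

lemma csubspace_add: "csubspace U \<Longrightarrow> u \<in> U \<Longrightarrow> v \<in> U \<Longrightarrow> (\<lambda>y. u y + v y) \<in> U"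
  unfolding csubspace_def by blast

lemma csubspace_scale: "csubspace U \<Longrightarrow> u \<in> U \<Longrightarrow> (\<lambda>y. c * u y) \<in> U"
  unfolding csubspace_def by blast

lemma csubspace_diff:
  assumes "csubspace U" "u \<in> U" "v \<in> U" shows "(\<lambda>y. u y - v y) \<in> U"
  using csubspace_add[OF assms(1,2) csubspace_scale[OF assms(1,3), of "-1"]] by simp

lemma csubspace_sum:
  assumes "csubspace U" "finite I" "\<And>k. k \<in> I \<Longrightarrow> f k \<in> U"
  shows "(\<lambda>y. \<Sum>k\<in>I. f k y) \<in> U"
  using assms(2,3)
proof (induction I rule: finite_induct)
  case empty then show ?case using csubspace_zero[OF assms(1)] by simp
next
  case (insert a I)
  then show ?case using csubspace_add[OF assms(1), of "f a" "\<lambda>y. \<Sum>k\<in>I. f k y"] by simp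
qed

lemma csubspace_UNIV: "csubspace UNIV"
  unfolding csubspace_def by simp

lemma csubspace_cinner_left_eq_0: "csubspace {u. cinner u v = 0}"
  unfolding csubspace_def by (simp add: cinner_add_left cinner_scale_left)

lemma csubspace_cinner_right_eq_0: "csubspace {v. cinner u v = 0}"
  unfolding csubspace_def by (simp add: cinner_add_right cinner_scale_right)

lemma csubspace_cspan: "csubspace (cspan I f)"
  unfolding csubspace_def cspan_def
proof (intro conjI ballI allI)
  show "(\<lambda>_. 0) \<in> {\<lambda>y. \<Sum>k\<in>I. c k * f k y |c. True}"
    by (auto intro!: exI[of _ "\<lambda>_. 0"])
next
  fix u v assume "u \<in> {\<lambda>y. \<Sum>k\<in>I. c k * f k y |c. True}" "v \<in> {\<lambda>y. \<Sum>k\<in>I. c k * f k y |c. True}"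
  then obtain a b where "u = (\<lambda>y. \<Sum>k\<in>I. a k * f k y)" "v = (\<lambda>y. \<Sum>k\<in>I. b k * f k y)" by blast
  then show "(\<lambda>y. u y + v y) \<in> {\<lambda>y. \<Sum>k\<in>I. c k * f k y |c. True}"
    by (auto simp: distrib_right sum.distrib intro!: exI[of _ "\<lambda>k. a k + b k"])
next
  fix c' u assume "u \<in> {\<lambda>y. \<Sum>k\<in>I. c k * f k y |c. True}"
  then obtain a where "u = (\<lambda>y. \<Sum>k\<in>I. a k * f k y)" by blast
  then show "(\<lambda>y. c' * u y) \<in> {\<lambda>y. \<Sum>k\<in>I. c k * f k y |c. True}"
    by (auto simp: sum_distrib_left mult.assoc intro!: exI[of _ "\<lambda>k. c' * a k"])
qed

lemma cspan_sum_mem: "(\<lambda>y. \<Sum>k\<in>I. c k * f k y) \<in> cspan I f"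
  unfolding cspan_def by blast

lemma cspan_mem:
  assumes "finite I" "k \<in> I" shows "f k \<in> cspan I f"
proof -
  have "f k = (\<lambda>y. \<Sum>j\<in>I. (if j = k then 1 else 0) * f j y)"
    using assms by (simp add: if_distrib if_distribR cong: if_cong)
  then show ?thesis unfolding cspan_def by (auto intro: exI[of _ "\<lambda>j. if j = k then 1 else 0"])
qed

lemma cspan_subset:
  assumes "csubspace U" "finite I" "\<And>k. k \<in> I \<Longrightarrow> f k \<in> U" shows "cspan I f \<subseteq> U"
proof
  fix u assume "u \<in> cspan I f"
  then obtain c where "u = (\<lambda>y. \<Sum>k\<in>I. c k * f k y)" unfolding cspan_def by blast
  then show "u \<in> U" using csubspace_sum[OF assms(1,2)] csubspace_scale[OF assms(1) assms(3)] by simp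
qed

text \<open>Orthogonal decompositions and dimensions are borrowed from the real inner product space
  \<open>complex^'a\<close>, whose inner product is the real part of \<^const>\<open>cinner\<close>.\<close>

definition to_vec :: "('a::finite \<Rightarrow> complex) \<Rightarrow> complex^'a" where
  "to_vec u = (\<chi> j. u j)"

definition cdim :: "('a::finite \<Rightarrow> complex) set \<Rightarrow> nat" where
  "cdim U = dim (to_vec ` U)"

lemma to_vec_nth [simp]: "to_vec u $ j = u j"
  unfolding to_vec_def by simp

lemma inj_to_vec: "inj to_vec"
  by (rule injI) (metis ext to_vec_nth)

lemma inner_to_vec: "inner (to_vec u) (to_vec v) = Re (cinner u v)"
  unfolding inner_vec_def cinner_def inner_complex_def Re_sum by simp

lemma subspace_to_vec_image:
  assumes U: "csubspace U" shows "subspace (to_vec ` U)"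
  unfolding subspace_def
proof (intro conjI ballI allI)
  show "0 \<in> to_vec ` U"
    using csubspace_zero[OF U] by (auto simp: image_iff vec_eq_iff)
next
  fix a b assume "a \<in> to_vec ` U" "b \<in> to_vec ` U"
  then obtain u v where "u \<in> U" "v \<in> U" "a = to_vec u" "b = to_vec v" by blast
  then show "a + b \<in> to_vec ` U"
    using csubspace_add[OF U] by (auto simp: image_iff vec_eq_iff intro!: bexI[of _ "\<lambda>y. u y + v y"])
next
  fix c :: real and a assume "a \<in> to_vec ` U"
  then obtain u where u: "u \<in> U" "a = to_vec u" by blast
  have "c *\<^sub>R a = to_vec (\<lambda>y. of_real c * u y)"
    unfolding vec_eq_iff vector_scaleR_component u(2) by (simp add: scaleR_conv_of_real)
  then show "c *\<^sub>R a \<in> to_vec ` U" using csubspace_scale[OF U u(1)] by blast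
qed

lemma csubspace_orthogonal_decomp:
  assumes U: "csubspace U"
  obtains u1 u2 where "u1 \<in> U" "\<forall>w\<in>U. cinner u2 w = 0" "u = (\<lambda>y. u1 y + u2 y)"
proof -
  have sp: "span (to_vec ` U) = to_vec ` U"
    using subspace_to_vec_image[OF U] by (rule span_eq_iff[THEN iffD2])
  obtain a b where ab: "a \<in> to_vec ` U" "\<And>w. w \<in> to_vec ` U \<Longrightarrow> orthogonal b w" "to_vec u = a + b"
    using orthogonal_subspace_decomp_exists[of "to_vec ` U" "to_vec u"] unfolding sp by blast
  obtain u1 where u1: "u1 \<in> U" "a = to_vec u1" using ab(1) by blast
  define u2 where "u2 = (\<lambda>j. b $ j)"
  have b: "b = to_vec u2" unfolding u2_def to_vec_def by simp
  have re0: "Re (cinner u2 w) = 0" if "w \<in> U" for w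
    using ab(2)[of "to_vec w"] that unfolding b orthogonal_def inner_to_vec by simp
  have "cinner u2 w = 0" if w: "w \<in> U" for w
  proof -
    have "Re (cinner u2 (\<lambda>y. \<i> * w y)) = 0" by (rule re0[OF csubspace_scale[OF U w]])
    then have "Im (cinner u2 w) = 0" unfolding cinner_scale_right by simp
    then show ?thesis using re0[OF w] by (simp add: complex_eq_iff)
  qed
  moreover have "u = (\<lambda>y. u1 y + u2 y)"
    using ab(3) unfolding u1(2) b by (simp add: vec_eq_iff fun_eq_iff)
  ultimately show ?thesis using that u1(1) by blast
qed

lemma cdim_psubset:
  assumes "csubspace U1" "csubspace U" "U1 \<subset> U"
  shows "cdim U1 < cdim U"
proof -
  have "to_vec ` U1 \<subset> to_vec ` U"
    using assms(3) inj_image_eq_iff[OF inj_to_vec] by blast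
  then have "span (to_vec ` U1) \<subset> span (to_vec ` U)"
    using assms(1,2) by (simp add: span_eq_iff[THEN iffD2, OF subspace_to_vec_image])
  then show ?thesis unfolding cdim_def by (rule dim_psubset)
qed

section \<open>Metric schemes seen from a base vertex\<close>

locale pointed_metric_scheme =
  fixes R :: "nat \<Rightarrow> ('a::finite \<times> 'a) set" and D :: nat and x :: 'a
  assumes scheme: "symmetric_association_scheme R D"
    and metric: "metric_scheme R D"
    and diameter_pos: "1 \<le> D"
begin

abbreviation "\<T> \<equiv> terwilliger_algebra R D x"

abbreviation Estar :: "nat \<Rightarrow> ('a \<Rightarrow> complex) \<Rightarrow> 'a \<Rightarrow> complex" where
  "Estar i u \<equiv> mvmult (dual_idem R x i) u"

abbreviation layer_char :: "nat \<Rightarrow> 'a \<Rightarrow> complex" where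
  "layer_char i \<equiv> mvmult (adj (R i)) (basis_vec x)"

lemma R_0: "R 0 = Id"
  and R_nonempty: "i \<le> D \<Longrightarrow> R i \<noteq> {}"
  and ex1_R: "\<exists>!i. i \<le> D \<and> (y, z) \<in> R i"
  and converse_R: "i \<le> D \<Longrightarrow> (R i)\<inverse> = R i"
  and intersection_number_ex: "i \<le> D \<Longrightarrow> j \<le> D \<Longrightarrow> k \<le> D \<Longrightarrow>
    \<exists>p. \<forall>y z. (y, z) \<in> R k \<longrightarrow> card {w. (y, w) \<in> R i \<and> (w, z) \<in> R j} = p"
  using scheme unfolding symmetric_association_scheme_def by simp_all

lemma R_sym: "i \<le> D \<Longrightarrow> (y, z) \<in> R i \<longleftrightarrow> (z, y) \<in> R i"
  using converse_R by (metis converse_iff)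

lemma R_iff_relpow:
  "i \<le> D \<Longrightarrow> (y, z) \<in> R i \<longleftrightarrow> (y, z) \<in> R 1 ^^ i \<and> (\<forall>j<i. (y, z) \<notin> R 1 ^^ j)"
  using metric unfolding metric_scheme_def by simp

definition distance :: "'a \<Rightarrow> 'a \<Rightarrow> nat" where
  "distance y z = (THE i. i \<le> D \<and> (y, z) \<in> R i)"

definition layer :: "'a \<Rightarrow> nat" where
  "layer y = distance x y"

definition intersection_number :: "nat \<Rightarrow> nat \<Rightarrow> nat \<Rightarrow> nat" where
  "intersection_number k i j =
     (SOME p. \<forall>y z. (y, z) \<in> R k \<longrightarrow> card {w. (y, w) \<in> R i \<and> (w, z) \<in> R j} = p)"

lemma distance_le: "distance y z \<le> D" and in_R_distance: "(y, z) \<in> R (distance y z)"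
  using theI'[OF ex1_R, of y z] unfolding distance_def by simp_all

lemma R_iff_distance:
  assumes "i \<le> D" shows "(y, z) \<in> R i \<longleftrightarrow> distance y z = i"
proof
  assume "(y, z) \<in> R i"
  then show "distance y z = i" unfolding distance_def by (intro the1_equality[OF ex1_R]) (simp add: assms)
next
  assume "distance y z = i"
  then show "(y, z) \<in> R i" using in_R_distance[of y z] by simp
qed

lemma distance_sym: "distance y z = distance z y"
proof -
  have "(z, y) \<in> R (distance y z)" using R_sym[OF distance_le] in_R_distance by blast
  then have "distance z y = distance y z" by (rule R_iff_distance[OF distance_le, THEN iffD1])
  then show ?thesis by simp
qed

lemma layer_le: "layer y \<le> D"
  unfolding layer_def by (rule distance_le)

lemma layer_eq_0_iff: "layer y = 0 \<longleftrightarrow> y = x"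
proof -
  have "layer y = 0 \<longleftrightarrow> (x, y) \<in> R 0" unfolding layer_def by (simp add: R_iff_distance)
  then show ?thesis unfolding R_0 by auto
qed

lemma dual_idem_apply:
  assumes "i \<le> D" shows "Estar i u y = (if layer y = i then u y else 0)"
proof -
  have "Estar i u y = (\<Sum>z\<in>UNIV. if z = y then adj (R i) x y * u z else 0)"
    unfolding mvmult_def dual_idem_def by (rule sum.cong) auto
  then have "Estar i u y = adj (R i) x y * u y" by simp
  then show ?thesis unfolding adj_def layer_def using R_iff_distance[OF assms] by simp
qed

lemma layer_char_apply:
  assumes "i \<le> D" shows "layer_char i y = (if layer y = i then 1 else 0)"
proof -
  have "layer_char i y = adj (R i) y x"
    unfolding mvmult_def basis_vec_def by (simp add: of_bool_def[symmetric])
  then show ?thesis unfolding adj_def layer_def using R_iff_distance[OF assms] distance_sym by simp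
qed

lemma card_eq_intersection_number:
  "i \<le> D \<Longrightarrow> j \<le> D \<Longrightarrow> k \<le> D \<Longrightarrow> (y, z) \<in> R k \<Longrightarrow>
    card {w. (y, w) \<in> R i \<and> (w, z) \<in> R j} = intersection_number k i j"
  using someI_ex[OF intersection_number_ex] unfolding intersection_number_def by blast

lemma adj_mult_adj:
  assumes "i \<le> D" "j \<le> D"
  shows "mmult (adj (R i)) (adj (R j)) =
    (\<lambda>y z. \<Sum>k\<le>D. of_nat (intersection_number k i j) * adj (R k) y z)"
proof (intro ext)
  fix y z
  have "mmult (adj (R i)) (adj (R j)) y z =
      (\<Sum>w\<in>UNIV. if (y, w) \<in> R i \<and> (w, z) \<in> R j then 1 else 0)"
    unfolding mmult_def adj_def by (rule sum.cong) auto
  also have "\<dots> = of_nat (card {w. (y, w) \<in> R i \<and> (w, z) \<in> R j})"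
    by (simp add: sum.If_cases)
  also have "\<dots> = of_nat (intersection_number (distance y z) i j)"
    using card_eq_intersection_number[OF assms distance_le in_R_distance] by simp
  also have "\<dots> = (\<Sum>k\<le>D. if k = distance y z then of_nat (intersection_number k i j) else 0)"
    using distance_le[of y z] by simp
  also have "\<dots> = (\<Sum>k\<le>D. of_nat (intersection_number k i j) * adj (R k) y z)"
    unfolding adj_def by (rule sum.cong) (auto simp: R_iff_distance)
  finally show "mmult (adj (R i)) (adj (R j)) y z =
      (\<Sum>k\<le>D. of_nat (intersection_number k i j) * adj (R k) y z)" .
qed

lemma adj_R_0: "mvmult (adj (R 0)) u = u"
proof -
  have "adj (R 0) = id_mat" unfolding adj_def id_mat_def R_0 by (auto intro!: ext)
  then show ?thesis by simp
qed

lemma in_R_relpow: "i \<le> D \<Longrightarrow> (y, z) \<in> R i \<Longrightarrow> (y, z) \<in> R 1 ^^ i"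
  using R_iff_relpow by blast

lemma le_of_R_relpow:
  assumes "i \<le> D" "(y, z) \<in> R i" "(y, z) \<in> R 1 ^^ j" shows "i \<le> j"
  using assms R_iff_relpow[OF assms(1)] not_le by blast

lemma distance_le_of_relpow: "(y, z) \<in> R 1 ^^ j \<Longrightarrow> distance y z \<le> j"
  by (rule le_of_R_relpow[OF distance_le in_R_distance])

lemma distance_le_Suc:
  assumes "(y, z) \<in> R 1" shows "distance w y \<le> Suc (distance w z)"
proof -
  have "(w, z) \<in> R 1 ^^ distance w z" using in_R_relpow distance_le in_R_distance by blast
  moreover have "(z, y) \<in> R 1" using assms R_sym[OF diameter_pos] by blast
  ultimately have "(w, y) \<in> R 1 ^^ Suc (distance w z)" by (rule relpow_Suc_I)
  then show ?thesis by (rule distance_le_of_relpow)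
qed

lemma layer_le_Suc: "(y, z) \<in> R 1 \<Longrightarrow> layer y \<le> Suc (layer z)"
  unfolding layer_def by (rule distance_le_Suc)

lemma intersection_number_eq_0:
  assumes "i \<le> D" "k \<le> D" "Suc i < k" shows "intersection_number k 1 i = 0"
proof -
  obtain y z where yz: "(y, z) \<in> R k" using R_nonempty[OF assms(2)] by auto
  have empty: "{w. (y, w) \<in> R 1 \<and> (w, z) \<in> R i} = {}"
  proof (rule ccontr)
    assume "{w. (y, w) \<in> R 1 \<and> (w, z) \<in> R i} \<noteq> {}"
    then obtain w where w: "(y, w) \<in> R 1" "(w, z) \<in> R i" by auto
    then have "(y, z) \<in> R 1 ^^ Suc i" using in_R_relpow[OF assms(1)] by (blast intro: relpow_Suc_I2)
    then show False using le_of_R_relpow[OF assms(2) yz] assms(3) by fastforce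
  qed
  show ?thesis using card_eq_intersection_number[OF diameter_pos assms(1,2) yz] unfolding empty by simp
qed

lemma intersection_number_Suc_neq_0:
  assumes "Suc i \<le> D" shows "intersection_number (Suc i) 1 i \<noteq> 0"
proof -
  obtain y z where yz: "(y, z) \<in> R (Suc i)" using R_nonempty[OF assms] by auto
  then have "(y, z) \<in> R 1 ^^ Suc i" by (rule in_R_relpow[OF assms])
  then obtain w where w: "(y, w) \<in> R 1" "(w, z) \<in> R 1 ^^ i" by (blast dest: relpow_Suc_D2)
  have "(w, z) \<in> R 1 ^^ distance w z" using in_R_relpow distance_le in_R_distance by blast
  with w(1) have "(y, z) \<in> R 1 ^^ Suc (distance w z)" by (rule relpow_Suc_I2)
  then have "Suc i \<le> Suc (distance w z)" by (rule le_of_R_relpow[OF assms yz])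
  then have "distance w z = i" using distance_le_of_relpow[OF w(2)] by simp
  then have "w \<in> {w. (y, w) \<in> R 1 \<and> (w, z) \<in> R i}" using w(1) in_R_distance[of w z] by simp
  then have "card {w. (y, w) \<in> R 1 \<and> (w, z) \<in> R i} \<noteq> 0" by (auto simp: card_eq_0_iff)
  moreover have "card {w. (y, w) \<in> R 1 \<and> (w, z) \<in> R i} = intersection_number (Suc i) 1 i"
    using assms by (intro card_eq_intersection_number[OF diameter_pos _ assms yz]) simp
  ultimately show ?thesis by linarith
qed

lemma adj1_adj_recurrence:
  assumes "Suc i \<le> D"
  defines "p k \<equiv> of_nat (intersection_number k 1 i) :: complex"
  shows "mvmult (adj (R 1)) (mvmult (adj (R i)) u) =
    (\<lambda>y. p (Suc i) * mvmult (adj (R (Suc i))) u y + (\<Sum>k\<le>i. p k * mvmult (adj (R k)) u y))"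
proof
  fix y
  have "mvmult (adj (R 1)) (mvmult (adj (R i)) u) y = (\<Sum>k\<le>D. p k * mvmult (adj (R k)) u y)"
    using assms unfolding mvmult_mmult[symmetric] adj_mult_adj[OF diameter_pos Suc_leD[OF assms(1)]]
    by (simp add: mvmult_sum_left mvmult_scale_left)
  also have "\<dots> = (\<Sum>k\<le>Suc i. p k * mvmult (adj (R k)) u y)"
    using assms intersection_number_eq_0[of i] by (intro sum.mono_neutral_right) auto
  finally show "mvmult (adj (R 1)) (mvmult (adj (R i)) u) y =
      p (Suc i) * mvmult (adj (R (Suc i))) u y + (\<Sum>k\<le>i. p k * mvmult (adj (R k)) u y)"
    by simp
qed

lemma csubspace_adj_closed:
  assumes U: "csubspace U" and A1: "\<And>u. u \<in> U \<Longrightarrow> mvmult (adj (R 1)) u \<in> U"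
  shows "l \<le> D \<Longrightarrow> u \<in> U \<Longrightarrow> mvmult (adj (R l)) u \<in> U"
proof (induction l arbitrary: u rule: less_induct)
  case (less l)
  show ?case
  proof (cases l)
    case 0 then show ?thesis using less.prems by (simp add: adj_R_0)
  next
    case (Suc i)
    define p where "p k = (of_nat (intersection_number k 1 i) :: complex)" for k
    have lower: "(\<lambda>y. \<Sum>k\<le>i. p k * mvmult (adj (R k)) u y) \<in> U"
      using less Suc by (intro csubspace_sum[OF U] csubspace_scale[OF U]) auto
    have "mvmult (adj (R 1)) (mvmult (adj (R i)) u) \<in> U"
      using less Suc by (intro A1) auto
    then have "(\<lambda>y. inverse (p l) * (mvmult (adj (R 1)) (mvmult (adj (R i)) u) y
        - (\<Sum>k\<le>i. p k * mvmult (adj (R k)) u y))) \<in> U"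
      by (intro csubspace_scale[OF U] csubspace_diff[OF U _ lower])
    moreover have "p l \<noteq> 0"
      using intersection_number_Suc_neq_0 less.prems Suc unfolding p_def by simp
    ultimately show ?thesis
      using adj1_adj_recurrence[of i u] less.prems Suc unfolding p_def by (simp add: field_simps)
  qed
qed

section \<open>Modules of the Terwilliger algebra\<close>

lemma mat_adjoint_adj: "i \<le> D \<Longrightarrow> mat_adjoint (adj (R i)) = adj (R i)"
  unfolding mat_adjoint_def adj_def using R_sym by (auto intro!: ext)

lemma mat_adjoint_dual_idem: "mat_adjoint (dual_idem R x i) = dual_idem R x i"
  unfolding mat_adjoint_def dual_idem_def adj_def by (auto intro!: ext)

lemma id_mat_in_T: "id_mat \<in> \<T>"
proof -
  have partial_sums: "n \<le> D \<Longrightarrow> (\<lambda>y z. \<Sum>i\<le>n. dual_idem R x i y z) \<in> \<T>" for n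
  proof (induction n)
    case 0 then show ?case using terwilliger_algebra.gen_Estar[of 0] by simp
  next
    case (Suc n)
    then have "(\<lambda>y z. (\<Sum>i\<le>n. dual_idem R x i y z) + dual_idem R x (Suc n) y z) \<in> \<T>"
      by (intro terwilliger_algebra.add terwilliger_algebra.gen_Estar) auto
    then show ?case by simp
  qed
  have "(\<lambda>y z. \<Sum>i\<le>D. dual_idem R x i y z) = id_mat"
  proof (intro ext)
    fix y z
    have "(\<Sum>i\<le>D. dual_idem R x i y z) = (\<Sum>i\<le>D. if i = layer y then id_mat y z else 0)"
      unfolding dual_idem_def adj_def layer_def id_mat_def by (rule sum.cong) (auto simp: R_iff_distance)
    then show "(\<Sum>i\<le>D. dual_idem R x i y z) = id_mat y z" using layer_le[of y] by simp
  qed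
  then show ?thesis using partial_sums[of D] by simp
qed

lemma mat_adjoint_in_T: "F \<in> \<T> \<Longrightarrow> mat_adjoint F \<in> \<T>"
proof (induction rule: terwilliger_algebra.induct)
  case (gen_A i)
  then show ?case by (simp add: mat_adjoint_adj terwilliger_algebra.gen_A)
next
  case (gen_Estar i)
  then show ?case by (simp add: mat_adjoint_dual_idem terwilliger_algebra.gen_Estar)
next
  case (add F G)
  then show ?case unfolding mat_adjoint_def using terwilliger_algebra.add by simp
next
  case (smult F c)
  then show ?case unfolding mat_adjoint_def using terwilliger_algebra.smult[where c = "cnj c"] by simp
next
  case (mult F G)
  then show ?case unfolding mat_adjoint_mmult by (simp add: terwilliger_algebra.mult)
qed

lemma T_module_csubspace: "T_module R D x W \<Longrightarrow> csubspace W"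
  unfolding T_module_def by blast

lemma T_module_mvmult: "T_module R D x W \<Longrightarrow> F \<in> \<T> \<Longrightarrow> w \<in> W \<Longrightarrow> mvmult F w \<in> W"
  unfolding T_module_def by blast

lemma T_moduleI:
  assumes U: "csubspace U" and A1: "\<And>u. u \<in> U \<Longrightarrow> mvmult (adj (R 1)) u \<in> U"
    and E: "\<And>i u. i \<le> D \<Longrightarrow> u \<in> U \<Longrightarrow> Estar i u \<in> U"
  shows "T_module R D x U"
  unfolding T_module_def
proof (intro conjI U ballI)
  fix F w assume "F \<in> \<T>" "w \<in> U"
  then show "mvmult F w \<in> U"
  proof (induction arbitrary: w rule: terwilliger_algebra.induct)
    case (gen_A i) then show ?case using csubspace_adj_closed[OF U A1] by simp
  next
    case (gen_Estar i) then show ?case using E by simp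
  next
    case (add F G) then show ?case unfolding mvmult_add_left by (simp add: csubspace_add[OF U])
  next
    case (smult F c) then show ?case unfolding mvmult_scale_left by (simp add: csubspace_scale[OF U])
  next
    case (mult F G) then show ?case unfolding mvmult_mmult by simp
  qed
qed

lemma T_module_annihilator:
  assumes W: "T_module R D x W"
    and f_add: "\<And>u v. f (\<lambda>y. u y + v y) = f u + f v"
    and f_scale: "\<And>c u. f (\<lambda>y. c * u y) = c * f u"
  shows "T_module R D x {w \<in> W. \<forall>G\<in>\<T>. f (mvmult G w) = 0}"
  unfolding T_module_def csubspace_def
proof (intro conjI ballI allI)
  have "f (\<lambda>_. 0) = 0" using f_scale[of 0 "\<lambda>_. 0"] by simp
  then show "(\<lambda>_. 0) \<in> {w \<in> W. \<forall>G\<in>\<T>. f (mvmult G w) = 0}"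
    using csubspace_zero[OF T_module_csubspace[OF W]] by simp
next
  fix u v assume "u \<in> {w \<in> W. \<forall>G\<in>\<T>. f (mvmult G w) = 0}" "v \<in> {w \<in> W. \<forall>G\<in>\<T>. f (mvmult G w) = 0}"
  then show "(\<lambda>y. u y + v y) \<in> {w \<in> W. \<forall>G\<in>\<T>. f (mvmult G w) = 0}"
    using csubspace_add[OF T_module_csubspace[OF W]] by (simp add: mvmult_add_right f_add)
next
  fix c u assume "u \<in> {w \<in> W. \<forall>G\<in>\<T>. f (mvmult G w) = 0}"
  then show "(\<lambda>y. c * u y) \<in> {w \<in> W. \<forall>G\<in>\<T>. f (mvmult G w) = 0}"
    using csubspace_scale[OF T_module_csubspace[OF W]] by (simp add: mvmult_scale_right f_scale)
next
  fix F u assume "F \<in> \<T>" "u \<in> {w \<in> W. \<forall>G\<in>\<T>. f (mvmult G w) = 0}"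
  then show "mvmult F u \<in> {w \<in> W. \<forall>G\<in>\<T>. f (mvmult G w) = 0}"
    using T_module_mvmult[OF W] terwilliger_algebra.mult[of _ R D x F]
    by (simp add: mvmult_mmult[symmetric])
qed

lemma T_module_orthogonal_complement:
  assumes U1: "T_module R D x U1" and U: "T_module R D x U"
  shows "T_module R D x {w \<in> U. \<forall>w1\<in>U1. cinner w w1 = 0}"
  unfolding T_module_def csubspace_def
proof (intro conjI ballI allI)
  fix F u assume F: "F \<in> \<T>" and u: "u \<in> {w \<in> U. \<forall>w1\<in>U1. cinner w w1 = 0}"
  have "cinner (mvmult F u) w1 = 0" if "w1 \<in> U1" for w1
    using u T_module_mvmult[OF U1 mat_adjoint_in_T[OF F] that] by (simp add: cinner_mvmult_left)
  then show "mvmult F u \<in> {w \<in> U. \<forall>w1\<in>U1. cinner w w1 = 0}"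
    using u T_module_mvmult[OF U F] by simp
qed (use csubspace_zero csubspace_add csubspace_scale T_module_csubspace[OF U]
     in \<open>auto simp: cinner_add_left cinner_scale_left\<close>)

definition on_layer :: "nat \<Rightarrow> ('a \<Rightarrow> complex) \<Rightarrow> bool" where
  "on_layer i u \<longleftrightarrow> (\<forall>y. layer y \<noteq> i \<longrightarrow> u y = 0)"

definition vanishes_above :: "nat \<Rightarrow> ('a \<Rightarrow> complex) \<Rightarrow> bool" where
  "vanishes_above j u \<longleftrightarrow> (\<forall>y. j < layer y \<longrightarrow> u y = 0)"

lemma on_layer_Estar: "i \<le> D \<Longrightarrow> on_layer i (Estar i u)"
  unfolding on_layer_def by (simp add: dual_idem_apply)

lemma Estar_on_layer: "i \<le> D \<Longrightarrow> on_layer i u \<Longrightarrow> Estar i u = u"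
  unfolding on_layer_def by (auto simp: dual_idem_apply)

lemma cinner_on_layer: "on_layer i v \<Longrightarrow> i \<le> D \<Longrightarrow> cinner v \<psi> = cinner v (Estar i \<psi>)"
  unfolding cinner_def on_layer_def by (intro sum.cong) (auto simp: dual_idem_apply)

lemma cinner_on_layer_eq_0:
  assumes "on_layer i v" "i \<le> D" "cinner v (layer_char i) = 0"
    and "lin_dependent2 (Estar i \<psi>) (layer_char i)"
  shows "cinner v \<psi> = 0"
proof -
  obtain a b where ab: "a \<noteq> 0 \<or> b \<noteq> 0" "\<And>y. a * Estar i \<psi> y + b * layer_char i y = 0"
    using assms(4) unfolding lin_dependent2_def by blast
  show ?thesis
  proof (cases "a = 0")
    case True
    then have "layer_char i y = 0" for y using ab by simp
    then have "layer y \<noteq> i" for y using layer_char_apply[OF assms(2), of y] by auto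
    then have "v = (\<lambda>_. 0)" using assms(1) unfolding on_layer_def by auto
    then show ?thesis by simp
  next
    case False
    have dep: "Estar i \<psi> = (\<lambda>y. (- b / a) * layer_char i y)"
    proof
      fix y
      have "a * Estar i \<psi> y = - b * layer_char i y" using ab(2)[of y] by (simp add: eq_neg_iff_add_eq_0)
      then show "Estar i \<psi> y = - b / a * layer_char i y" using False by (simp add: field_simps)
    qed
    then show ?thesis
      using assms(3) unfolding cinner_on_layer[OF assms(1,2), of \<psi>] dep cinner_scale_right by simp
  qed
qed

lemma cinner_layer_char_eq_0:
  assumes "T_module R D x W" "\<forall>w\<in>W. w x = 0" "v \<in> W" "i \<le> D"
  shows "cinner v (layer_char i) = 0"
proof -
  have "cinner v (layer_char i) = mvmult (adj (R i)) v x"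
    unfolding mvmult_eq_cinner_basis_vec[of "adj (R i)" v x] mat_adjoint_adj[OF assms(4)] ..
  also have "\<dots> = 0"
    using assms(2) T_module_mvmult[OF assms(1) terwilliger_algebra.gen_A[OF assms(4)] assms(3)] by blast
  finally show ?thesis .
qed

lemma irreducible_T_module_T_module: "irreducible_T_module R D x W \<Longrightarrow> T_module R D x W"
  unfolding irreducible_T_module_def by (elim conjE)

lemma irreducible_T_module_eq:
  assumes "irreducible_T_module R D x W" "T_module R D x U" "U \<subseteq> W" "u \<in> U" "u \<noteq> (\<lambda>_. 0)"
  shows "U = W"
proof -
  have "\<forall>U. T_module R D x U \<and> U \<subseteq> W \<longrightarrow> U = {\<lambda>_. 0} \<or> U = W"
    using assms(1) unfolding irreducible_T_module_def by (elim conjE)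
  then have "U = {\<lambda>_. 0} \<or> U = W" using assms(2,3) by simp
  then show ?thesis using assms(4,5) by auto
qed

lemma irreducible_T_module_nonzero:
  assumes "irreducible_T_module R D x W" obtains w where "w \<in> W" "w \<noteq> (\<lambda>_. 0)"
proof -
  have "T_module R D x W" "W \<noteq> {\<lambda>_. 0}" using assms unfolding irreducible_T_module_def by simp_all
  then show ?thesis using that csubspace_zero[OF T_module_csubspace] by blast
qed

lemma reducible_T_module:
  assumes "T_module R D x U" "u \<in> U" "u \<noteq> (\<lambda>_. 0)" "\<not> irreducible_T_module R D x U"
  obtains U1 w1 where "T_module R D x U1" "U1 \<subset> U" "w1 \<in> U1" "w1 \<noteq> (\<lambda>_. 0)"
proof -
  have "U \<noteq> {\<lambda>_. 0}" using assms(2,3) by auto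
  then have "\<exists>U1. T_module R D x U1 \<and> U1 \<subseteq> U \<and> U1 \<noteq> {\<lambda>_. 0} \<and> U1 \<noteq> U"
    using assms(1,4) unfolding irreducible_T_module_def by auto
  then obtain U1 where "T_module R D x U1" "U1 \<subset> U" "U1 \<noteq> {\<lambda>_. 0}" by blast
  then show ?thesis using that csubspace_zero[OF T_module_csubspace] by blast
qed

lemma Estar_layer_nonzero:
  assumes "w y \<noteq> 0" shows "Estar (layer y) w \<noteq> (\<lambda>_. 0)"
proof
  assume "Estar (layer y) w = (\<lambda>_. 0)"
  then have "Estar (layer y) w y = 0" by simp
  then show False using assms by (simp add: dual_idem_apply[OF layer_le])
qed

lemma endpoint_le_layer:
  assumes "w \<in> W" "w y \<noteq> 0" shows "endpoint R D x W \<le> layer y"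
proof -
  have "layer y \<le> D \<and> (\<exists>w\<in>W. Estar (layer y) w \<noteq> (\<lambda>_. 0))"
    using layer_le Estar_layer_nonzero[of w y, OF assms(2)] assms(1) by blast
  then show ?thesis unfolding endpoint_def by (rule Least_le)
qed

lemma vanishes_below_endpoint: "w \<in> W \<Longrightarrow> layer y < endpoint R D x W \<Longrightarrow> w y = 0"
  using endpoint_le_layer[of w W y] by linarith

lemma endpoint_le_D:
  assumes "w \<in> W" "w \<noteq> (\<lambda>_. 0)" shows "endpoint R D x W \<le> D"
proof -
  obtain y where "w y \<noteq> 0" using assms(2) by auto
  then have "endpoint R D x W \<le> layer y" by (rule endpoint_le_layer[OF assms(1)])
  then show ?thesis using layer_le[of y] by simp
qed

lemma Estar_endpoint_nonzero:
  assumes "w \<in> W" "w \<noteq> (\<lambda>_. 0)"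
  obtains w' where "w' \<in> W" "Estar (endpoint R D x W) w' \<noteq> (\<lambda>_. 0)"
proof -
  obtain y where "w y \<noteq> 0" using assms(2) by auto
  then have "layer y \<le> D \<and> (\<exists>w\<in>W. Estar (layer y) w \<noteq> (\<lambda>_. 0))"
    using assms(1) layer_le Estar_layer_nonzero by blast
  then have "endpoint R D x W \<le> D \<and> (\<exists>w\<in>W. Estar (endpoint R D x W) w \<noteq> (\<lambda>_. 0))"
    unfolding endpoint_def by (rule LeastI)
  then show ?thesis using that by blast
qed

lemma endpoint_vector:
  assumes "irreducible_T_module R D x W"
  obtains v where "v \<in> W" "v \<noteq> (\<lambda>_. 0)" "on_layer (endpoint R D x W) v" "endpoint R D x W \<le> D"
proof -
  obtain w0 where w0: "w0 \<in> W" "w0 \<noteq> (\<lambda>_. 0)" using irreducible_T_module_nonzero[OF assms] .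
  obtain w where w: "w \<in> W" "Estar (endpoint R D x W) w \<noteq> (\<lambda>_. 0)"
    using Estar_endpoint_nonzero[OF w0] .
  have rD: "endpoint R D x W \<le> D" by (rule endpoint_le_D[OF w0])
  show ?thesis
  proof (rule that[OF _ w(2) on_layer_Estar[OF rD] rD])
    show "Estar (endpoint R D x W) w \<in> W"
      using T_module_mvmult[OF irreducible_T_module_T_module[OF assms]
          terwilliger_algebra.gen_Estar[OF rD] w(1)] .
  qed
qed

section \<open>Orthogonality and codesigns\<close>

lemma orthogonal_to_iff: "orthogonal_to chi W \<longleftrightarrow> (\<forall>w\<in>W. cinner w chi = 0)"
  unfolding orthogonal_to_def cinner_def ..

lemma vanishes_at_base: "w \<in> W \<Longrightarrow> 1 \<le> endpoint R D x W \<Longrightarrow> w x = 0"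
  using vanishes_below_endpoint[of w W x] layer_eq_0_iff[of x] by simp

lemma orthogonal_of_codesign:
  assumes codesign: "\<forall>F\<in>\<T>. relative_codesign R x t (mvmult F chi)"
    and W: "irreducible_T_module R D x W"
    and ep: "1 \<le> endpoint R D x W" "endpoint R D x W \<le> t"
  shows "orthogonal_to chi W"
proof -
  define r where "r = endpoint R D x W"
  have TW: "T_module R D x W" by (rule irreducible_T_module_T_module[OF W])
  obtain v where v: "v \<in> W" "v \<noteq> (\<lambda>_. 0)" "on_layer r v" and rD: "r \<le> D"
    using endpoint_vector[OF W] unfolding r_def .
  have "cinner v (layer_char r) = 0"
    using cinner_layer_char_eq_0[OF TW _ v(1) rD] vanishes_at_base[OF _ ep(1)] by blast
  define U where "U = {u \<in> W. \<forall>G\<in>\<T>. cinner (mvmult G u) chi = 0}"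
  have TU: "T_module R D x U"
    unfolding U_def by (rule T_module_annihilator[OF TW cinner_add_left cinner_scale_left])
  have "cinner (mvmult G v) chi = 0" if G: "G \<in> \<T>" for G
  proof -
    have "relative_codesign R x t (mvmult (mat_adjoint G) chi)"
      using codesign mat_adjoint_in_T[OF G] by blast
    then have "lin_dependent2 (Estar r (mvmult (mat_adjoint G) chi)) (layer_char r)"
      using ep unfolding r_def relative_codesign_def by blast
    with \<open>cinner v (layer_char r) = 0\<close> have "cinner v (mvmult (mat_adjoint G) chi) = 0"
      by (rule cinner_on_layer_eq_0[OF v(3) rD])
    then show ?thesis by (simp add: cinner_mvmult_left)
  qed
  then have "v \<in> U" unfolding U_def using v(1) by blast
  moreover have "U \<subseteq> W" unfolding U_def by blast
  ultimately have "U = W" using irreducible_T_module_eq[OF W TU _ _ v(2)] by blast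
  show ?thesis unfolding orthogonal_to_iff
  proof
    fix u assume "u \<in> W"
    then have "cinner (mvmult id_mat u) chi = 0" using \<open>U = W\<close> id_mat_in_T unfolding U_def by blast
    then show "cinner u chi = 0" by simp
  qed
qed

definition radial :: "('a \<Rightarrow> complex) \<Rightarrow> bool" where
  "radial u \<longleftrightarrow> (\<exists>c. \<forall>y. u y = c (layer y))"

lemma radial_basis_vec: "radial (basis_vec x)"
  unfolding radial_def basis_vec_def
  by (rule exI[of _ "\<lambda>k. if k = 0 then 1 else 0"]) (simp add: layer_eq_0_iff)

text \<open>The value of \<open>A\<^sub>l u\<close> at a vertex of layer \<open>j\<close> is \<open>\<Sum>\<^sub>k p\<^sup>j\<^sub>k\<^sub>l c\<^sub>k\<close>, where \<open>c\<^sub>k\<close> is the value of \<open>u\<close>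
  on layer \<open>k\<close>.\<close>

lemma radial_adj:
  assumes l: "l \<le> D" and u: "\<forall>y. u y = c (layer y)"
  shows "radial (mvmult (adj (R l)) u)"
  unfolding radial_def
proof (intro exI allI)
  fix y
  have "mvmult (adj (R l)) u y = (\<Sum>z\<in>UNIV. \<Sum>k\<le>D. if (x, z) \<in> R k \<and> (z, y) \<in> R l then c k else 0)"
    unfolding adj_apply u[rule_format]
  proof (rule sum.cong)
    fix z
    have "(\<Sum>k\<le>D. if (x, z) \<in> R k \<and> (z, y) \<in> R l then c k else 0)
        = (\<Sum>k\<le>D. if k = layer z then (if (y, z) \<in> R l then c k else 0) else 0)"
      unfolding layer_def by (rule sum.cong) (auto simp: R_iff_distance R_sym[OF l, of z y])
    then show "(if (y, z) \<in> R l then c (layer z) else 0) =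
        (\<Sum>k\<le>D. if (x, z) \<in> R k \<and> (z, y) \<in> R l then c k else 0)"
      using layer_le[of z] by simp
  qed simp
  also have "\<dots> = (\<Sum>k\<le>D. \<Sum>z\<in>UNIV. if (x, z) \<in> R k \<and> (z, y) \<in> R l then c k else 0)"
    by (rule sum.swap)
  also have "\<dots> = (\<Sum>k\<le>D. c k * of_nat (card {z. (x, z) \<in> R k \<and> (z, y) \<in> R l}))"
    by (simp add: sum.If_cases mult.commute)
  also have "\<dots> = (\<Sum>k\<le>D. c k * of_nat (intersection_number (layer y) k l))"
    using card_eq_intersection_number[OF _ l layer_le] in_R_distance[of x y]
    unfolding layer_def by simp
  finally show "mvmult (adj (R l)) u y = (\<lambda>j. \<Sum>k\<le>D. c k * of_nat (intersection_number j k l)) (layer y)"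
    by simp
qed

lemma radial_mvmult: "F \<in> \<T> \<Longrightarrow> radial u \<Longrightarrow> radial (mvmult F u)"
proof (induction arbitrary: u rule: terwilliger_algebra.induct)
  case (gen_A i)
  then show ?case using radial_adj unfolding radial_def by blast
next
  case (gen_Estar i)
  then obtain c where "\<forall>y. u y = c (layer y)" unfolding radial_def by blast
  then show ?case unfolding radial_def using gen_Estar.hyps
    by (intro exI[of _ "\<lambda>k. if k = i then c k else 0"]) (simp add: dual_idem_apply)
next
  case (add F G)
  then obtain c1 c2 where "\<forall>y. mvmult F u y = c1 (layer y)" "\<forall>y. mvmult G u y = c2 (layer y)"
    unfolding radial_def by blast
  then show ?case unfolding radial_def mvmult_add_left
    by (intro exI[of _ "\<lambda>k. c1 k + c2 k"]) simp
next
  case (smult F c)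
  then obtain c1 where "\<forall>y. mvmult F u y = c1 (layer y)" unfolding radial_def by blast
  then show ?case unfolding radial_def mvmult_scale_left
    by (intro exI[of _ "\<lambda>k. c * c1 k"]) simp
next
  case (mult F G)
  then show ?case unfolding mvmult_mmult by simp
qed

lemma cinner_radial_eq_0:
  assumes "on_layer i v" "i \<le> D" "cinner v (layer_char i) = 0" "radial s"
  shows "cinner v s = 0"
proof -
  obtain c where c: "\<forall>y. s y = c (layer y)" using assms(4) unfolding radial_def by blast
  have "v y * cnj (s y) = v y * cnj (c i * layer_char i y)" for y
    using assms(1) c layer_char_apply[OF assms(2)] unfolding on_layer_def by (cases "layer y = i") simp_all
  then have "cinner v s = cinner v (\<lambda>y. c i * layer_char i y)"
    unfolding cinner_def by (intro sum.cong) simp_all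
  then show ?thesis using assms(3) by (simp add: cinner_scale_right)
qed

lemma mvmult_at_x_eq_0:
  assumes "on_layer i v" "i \<le> D" "cinner v (layer_char i) = 0" "G \<in> \<T>"
  shows "mvmult G v x = 0"
  unfolding mvmult_eq_cinner_basis_vec[of G v x]
  by (rule cinner_radial_eq_0[OF assms(1-3) radial_mvmult[OF mat_adjoint_in_T[OF assms(4)] radial_basis_vec]])

lemma lin_dependent2_layer_char:
  assumes "i \<le> D" and orth: "\<And>u. on_layer i u \<Longrightarrow> cinner u (layer_char i) = 0 \<Longrightarrow> cinner u \<psi> = 0"
  shows "lin_dependent2 (Estar i \<psi>) (layer_char i)"
proof (cases "layer_char i = (\<lambda>_. 0)")
  case True
  then show ?thesis unfolding lin_dependent2_def by (intro exI[of _ 0] exI[of _ 1]) simp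
next
  case False
  define c where "c = cinner (Estar i \<psi>) (layer_char i) / cinner (layer_char i) (layer_char i)"
  define u where "u = (\<lambda>y. Estar i \<psi> y - c * layer_char i y)"
  have u_orth: "cinner u (layer_char i) = 0"
    using False unfolding u_def c_def cinner_diff_left cinner_scale_left
    by (simp add: cinner_self_eq_0_iff)
  have u_layer: "on_layer i u"
    unfolding on_layer_def u_def using assms(1) by (simp add: dual_idem_apply layer_char_apply)
  have "cinner u u = cinner u \<psi>"
    unfolding cinner_on_layer[OF u_layer assms(1), of \<psi>]
    by (simp add: u_def cinner_diff_right cinner_scale_right u_orth[unfolded u_def])
  then have "u = (\<lambda>_. 0)" using orth[OF u_layer u_orth] by (simp add: cinner_self_eq_0_iff)
  then show ?thesis unfolding lin_dependent2_def u_def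
    by (intro exI[of _ 1] exI[of _ "- c"]) (simp add: fun_eq_iff)
qed

lemma T_module_UNIV: "T_module R D x UNIV"
  unfolding T_module_def by (simp add: csubspace_UNIV)

lemma orthogonal_to_mvmult:
  assumes "T_module R D x W" "F \<in> \<T>" "orthogonal_to chi W"
  shows "orthogonal_to (mvmult F chi) W"
  unfolding orthogonal_to_iff
proof
  fix w assume "w \<in> W"
  then have "cinner (mvmult (mat_adjoint F) w) chi = 0"
    using assms T_module_mvmult[OF assms(1) mat_adjoint_in_T[OF assms(2)]] unfolding orthogonal_to_iff by blast
  then show "cinner w (mvmult F chi) = 0" by (simp add: cinner_mvmult_left)
qed

lemma endpoint_pos:
  assumes "irreducible_T_module R D x U" "\<forall>w\<in>U. w x = 0"
  shows "1 \<le> endpoint R D x U"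
proof (rule ccontr)
  assume "\<not> 1 \<le> endpoint R D x U"
  then have ep: "endpoint R D x U = 0" by simp
  obtain w where "w \<in> U" "w \<noteq> (\<lambda>_. 0)" using irreducible_T_module_nonzero[OF assms(1)] .
  then obtain w' where "w' \<in> U" "Estar 0 w' \<noteq> (\<lambda>_. 0)"
    by (rule Estar_endpoint_nonzero[where W = U, unfolded ep])
  moreover have "Estar 0 w' = (\<lambda>_. 0)"
    using assms(2) \<open>w' \<in> U\<close> by (auto simp: dual_idem_apply layer_eq_0_iff)
  ultimately show False by simp
qed

lemma orthogonal_T_modules_on_layer:
  assumes U1: "T_module R D x U1" and U2: "T_module R D x U2"
    and orth: "\<forall>a\<in>U2. \<forall>b\<in>U1. cinner a b = 0"
    and "u1 \<in> U1" "u2 \<in> U2" "layer y = j" "\<forall>z. layer z = j \<longrightarrow> u1 z + u2 z = 0"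
  shows "u1 y = 0"
proof -
  have j: "j \<le> D" using assms(6) layer_le by auto
  have E1: "Estar j u1 \<in> U1" using T_module_mvmult[OF U1 terwilliger_algebra.gen_Estar[OF j] assms(4)] .
  have "Estar j u1 = (\<lambda>z. (-1) * Estar j u2 z)"
    using assms(7) by (auto simp: dual_idem_apply[OF j] add_eq_0_iff intro!: ext)
  also have "\<dots> \<in> U2"
    by (intro csubspace_scale T_module_csubspace[OF U2] T_module_mvmult[OF U2 _ assms(5)]
        terwilliger_algebra.gen_Estar[OF j])
  finally have "cinner (Estar j u1) (Estar j u1) = 0" using orth E1 by blast
  then have "Estar j u1 y = 0" by (simp add: cinner_self_eq_0_iff)
  then show ?thesis using assms(6) by (simp add: dual_idem_apply[OF j])
qed

lemma reducible_T_module_split: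
  assumes U: "T_module R D x U" and u: "u \<in> U" "u \<noteq> (\<lambda>_. 0)" "vanishes_above t u"
    and "\<not> irreducible_T_module R D x U"
  obtains U1 U2 u1 u2 where "T_module R D x U1" "T_module R D x U2" "U1 \<subset> U" "U2 \<subset> U"
    "u1 \<in> U1" "u2 \<in> U2" "vanishes_above t u1" "vanishes_above t u2" "u = (\<lambda>y. u1 y + u2 y)"
proof -
  obtain U1 w1 where U1: "T_module R D x U1" "U1 \<subset> U" and w1: "w1 \<in> U1" "w1 \<noteq> (\<lambda>_. 0)"
    using reducible_T_module[OF U u(1,2) assms(5)] .
  define U2 where "U2 = {w \<in> U. \<forall>w1\<in>U1. cinner w w1 = 0}"
  have U2: "T_module R D x U2"
    unfolding U2_def by (rule T_module_orthogonal_complement[OF U1(1) U])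
  have "cinner w1 w1 \<noteq> 0" using w1(2) by (simp add: cinner_self_eq_0_iff)
  then have "U2 \<subset> U" using w1(1) U1(2) unfolding U2_def by blast
  obtain u1 u2 where u1: "u1 \<in> U1" and u2_orth: "\<forall>w\<in>U1. cinner u2 w = 0"
    and u_eq: "u = (\<lambda>y. u1 y + u2 y)"
    using csubspace_orthogonal_decomp[OF T_module_csubspace[OF U1(1)]] .
  have "u2 = (\<lambda>y. u y - u1 y)" using u_eq by auto
  then have "u2 \<in> U" using csubspace_diff[OF T_module_csubspace[OF U] u(1)] u1 U1(2) by auto
  then have u2: "u2 \<in> U2" unfolding U2_def using u2_orth by blast
  have orth: "\<forall>a\<in>U2. \<forall>b\<in>U1. cinner a b = 0" unfolding U2_def by blast
  have "vanishes_above t u1 \<and> vanishes_above t u2"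
    unfolding vanishes_above_def
  proof (intro allI impI conjI)
    fix y assume "t < layer y"
    then have "\<forall>z. layer z = layer y \<longrightarrow> u1 z + u2 z = 0"
      using u(3) unfolding vanishes_above_def u_eq by simp
    moreover show "u1 y = 0"
      using orthogonal_T_modules_on_layer[OF U1(1) U2 orth u1 u2 refl] calculation .
    ultimately show "u2 y = 0" by force
  qed
  then show ?thesis using that U1 U2 \<open>U2 \<subset> U\<close> u1 u2 u_eq by blast
qed

text \<open>Induction on the dimension of \<open>U\<close>: an irreducible \<open>U\<close> has endpoint between \<open>1\<close> and \<open>t\<close>, and a
  reducible one splits \<open>u\<close> into two smaller modules.\<close>

lemma cinner_eq_0_of_vanishes_above:
  assumes H: "\<forall>W. irreducible_T_module R D x W \<and> 1 \<le> endpoint R D x W \<and> endpoint R D x W \<le> t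
                 \<longrightarrow> orthogonal_to \<psi> W"
  shows "T_module R D x U \<Longrightarrow> \<forall>w\<in>U. w x = 0 \<Longrightarrow> u \<in> U \<Longrightarrow> vanishes_above t u \<Longrightarrow> cinner u \<psi> = 0"
proof (induction "cdim U" arbitrary: U u rule: less_induct)
  case (less U u)
  note U = less.prems(1) and U_x = less.prems(2) and u = less.prems(3) and u_t = less.prems(4)
  consider "u = (\<lambda>_. 0)" | "u \<noteq> (\<lambda>_. 0)" "irreducible_T_module R D x U"
    | "u \<noteq> (\<lambda>_. 0)" "\<not> irreducible_T_module R D x U" by blast
  then show ?case
  proof cases
    case 1 then show ?thesis by simp
  next
    case 2
    then obtain y where "u y \<noteq> 0" by auto
    then have "endpoint R D x U \<le> layer y" "layer y \<le> t"
      using endpoint_le_layer[OF u] u_t unfolding vanishes_above_def by (auto simp: not_less[symmetric])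
    then have "orthogonal_to \<psi> U" using H endpoint_pos[OF 2(2) U_x] 2(2) by auto
    then show ?thesis using u unfolding orthogonal_to_iff by blast
  next
    case 3
    obtain U1 U2 u1 u2 where U12: "T_module R D x U1" "T_module R D x U2" "U1 \<subset> U" "U2 \<subset> U"
      and u12: "u1 \<in> U1" "u2 \<in> U2" "vanishes_above t u1" "vanishes_above t u2"
      and u_eq: "u = (\<lambda>y. u1 y + u2 y)"
      using reducible_T_module_split[OF U u 3(1) u_t 3(2)] .
    have "cdim U1 < cdim U" "cdim U2 < cdim U"
      using U12 by (simp_all add: cdim_psubset T_module_csubspace U)
    then have "cinner u1 \<psi> = 0" "cinner u2 \<psi> = 0"
      using less.hyps[OF _ U12(1) _ u12(1,3)] less.hyps[OF _ U12(2) _ u12(2,4)] U_x U12(3,4) by blast+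
    then show ?thesis unfolding u_eq cinner_add_left by simp
  qed
qed

lemma codesign_of_orthogonal:
  assumes orth: "\<forall>W. irreducible_T_module R D x W \<and> 1 \<le> endpoint R D x W \<and> endpoint R D x W \<le> t
                   \<longrightarrow> orthogonal_to chi W"
    and "t \<le> D" and F: "F \<in> \<T>"
  shows "relative_codesign R x t (mvmult F chi)"
  unfolding relative_codesign_def
proof (intro allI impI)
  fix i assume i: "1 \<le> i \<and> i \<le> t"
  then have iD: "i \<le> D" using assms(2) by simp
  define U0 where "U0 = {w \<in> UNIV. \<forall>G\<in>\<T>. mvmult G w x = 0}"
  have U0: "T_module R D x U0"
    unfolding U0_def by (rule T_module_annihilator[OF T_module_UNIV]) simp_all
  have U0_x: "\<forall>w\<in>U0. w x = 0"
  proof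
    fix w assume "w \<in> U0"
    then have "mvmult id_mat w x = 0" using id_mat_in_T unfolding U0_def by blast
    then show "w x = 0" by simp
  qed
  have orth_F: "\<forall>W. irreducible_T_module R D x W \<and> 1 \<le> endpoint R D x W \<and> endpoint R D x W \<le> t
                  \<longrightarrow> orthogonal_to (mvmult F chi) W"
    using orth orthogonal_to_mvmult[OF irreducible_T_module_T_module F] by blast
  show "lin_dependent2 (Estar i (mvmult F chi)) (layer_char i)"
  proof (rule lin_dependent2_layer_char[OF iD])
    fix u assume u: "on_layer i u" "cinner u (layer_char i) = 0"
    have "u \<in> U0" unfolding U0_def using mvmult_at_x_eq_0[OF u(1) iD u(2)] by blast
    moreover have "vanishes_above t u" using u(1) i unfolding on_layer_def vanishes_above_def by auto
    ultimately show "cinner u (mvmult F chi) = 0"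
      by (rule cinner_eq_0_of_vanishes_above[OF orth_F U0 U0_x])
  qed
qed

section \<open>Thin modules\<close>

definition adj1_pow :: "('a \<Rightarrow> complex) \<Rightarrow> nat \<Rightarrow> 'a \<Rightarrow> complex" where
  "adj1_pow u k = (mvmult (adj (R 1)) ^^ k) u"

lemma adj1_pow_0 [simp]: "adj1_pow u 0 = u"
  and adj1_pow_Suc [simp]: "adj1_pow u (Suc k) = mvmult (adj (R 1)) (adj1_pow u k)"
  unfolding adj1_pow_def by simp_all

lemma cinner_adj1_pow: "cinner (adj1_pow u k) w = cinner u (adj1_pow w k)"
proof (induction k arbitrary: w)
  case (Suc k)
  have "cinner (adj1_pow u (Suc k)) w = cinner (adj1_pow u k) (mvmult (adj (R 1)) w)"
    unfolding adj1_pow_Suc cinner_mvmult_left mat_adjoint_adj[OF diameter_pos] ..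
  also have "\<dots> = cinner u (adj1_pow (mvmult (adj (R 1)) w) k)" by (rule Suc.IH)
  also have "adj1_pow (mvmult (adj (R 1)) w) k = adj1_pow w (Suc k)"
    unfolding adj1_pow_def by (simp only: funpow_Suc_right o_apply)
  finally show ?case .
qed simp

lemma adj1_pow_in_T_module: "T_module R D x W \<Longrightarrow> u \<in> W \<Longrightarrow> adj1_pow u k \<in> W"
proof (induction k)
  case (Suc k)
  then show ?case
    unfolding adj1_pow_Suc by (intro T_module_mvmult terwilliger_algebra.gen_A[OF diameter_pos])
qed simp

lemma adj1_pow_in_cspan: "adj1_pow u k \<in> cspan {..D} (\<lambda>l. mvmult (adj (R l)) u)"
proof (induction k)
  case 0
  show ?case using cspan_mem[of "{..D}" 0 "\<lambda>l. mvmult (adj (R l)) u"] by (simp add: adj_R_0)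
next
  case (Suc k)
  let ?S = "cspan {..D} (\<lambda>l. mvmult (adj (R l)) u)"
  have basis: "mvmult (adj (R 1)) (mvmult (adj (R l)) u) \<in> ?S" if "l \<le> D" for l
    unfolding mvmult_mmult[symmetric] adj_mult_adj[OF diameter_pos that]
      mvmult_sum_left mvmult_scale_left by (rule cspan_sum_mem)
  obtain c where c: "adj1_pow u k = (\<lambda>y. \<Sum>l\<le>D. c l * mvmult (adj (R l)) u y)"
    using Suc.IH unfolding cspan_def by blast
  have "adj1_pow u (Suc k) = (\<lambda>y. \<Sum>l\<le>D. c l * mvmult (adj (R 1)) (mvmult (adj (R l)) u) y)"
    unfolding adj1_pow_Suc c mvmult_sum_right mvmult_scale_right ..
  also have "\<dots> \<in> ?S"
    using basis by (intro csubspace_sum[OF csubspace_cspan] csubspace_scale[OF csubspace_cspan]) auto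
  finally show ?case .
qed

lemma cinner_adj1_pow_eq_0:
  assumes codesign: "\<forall>l\<le>D. relative_codesign R x t (mvmult (adj (R l)) chi)"
    and r: "1 \<le> r" "r \<le> t" "r \<le> D"
    and v: "on_layer r v" "cinner v (layer_char r) = 0"
  shows "cinner (adj1_pow v k) chi = 0"
proof -
  have "cinner v (mvmult (adj (R l)) chi) = 0" if "l \<in> {..D}" for l
  proof (rule cinner_on_layer_eq_0[OF v(1) r(3) v(2)])
    show "lin_dependent2 (Estar r (mvmult (adj (R l)) chi)) (layer_char r)"
      using codesign that r unfolding relative_codesign_def by auto
  qed
  then have "cspan {..D} (\<lambda>l. mvmult (adj (R l)) chi) \<subseteq> {w. cinner v w = 0}"
    by (intro cspan_subset csubspace_cinner_right_eq_0) auto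
  then show ?thesis using adj1_pow_in_cspan[of chi k] by (auto simp: cinner_adj1_pow)
qed

lemma vanishes_above_adj1:
  assumes "vanishes_above j u" shows "vanishes_above (Suc j) (mvmult (adj (R 1)) u)"
  unfolding vanishes_above_def adj_apply
proof (intro allI impI sum.neutral ballI)
  fix y z assume "Suc j < layer y"
  then show "(if (y, z) \<in> R 1 then u z else 0) = 0"
    using assms layer_le_Suc[of y z] unfolding vanishes_above_def by auto
qed

lemma vanishes_above_adj1_pow: "vanishes_above j u \<Longrightarrow> vanishes_above (j + k) (adj1_pow u k)"
proof (induction k)
  case (Suc k)
  then show ?case unfolding adj1_pow_Suc add_Suc_right by (intro vanishes_above_adj1)
qed simp

lemma Estar_Suc_adj1:
  assumes "vanishes_above j u" "Suc j \<le> D"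
  shows "Estar (Suc j) (mvmult (adj (R 1)) u) = Estar (Suc j) (mvmult (adj (R 1)) (Estar j u))"
proof
  fix y
  have "(if (y, z) \<in> R 1 then u z else 0) = (if (y, z) \<in> R 1 then Estar j u z else 0)"
    if "layer y = Suc j" for z
    using assms layer_le_Suc[of y z] that unfolding vanishes_above_def
    by (auto simp: dual_idem_apply)
  then show "Estar (Suc j) (mvmult (adj (R 1)) u) y = Estar (Suc j) (mvmult (adj (R 1)) (Estar j u)) y"
    using assms(2) by (simp add: dual_idem_apply adj_apply)
qed

lemma layer_decomp:
  assumes "\<forall>y. layer y < r \<longrightarrow> u y = 0" "vanishes_above (r + M) u" "r + M \<le> D"
  shows "u = (\<lambda>y. \<Sum>m\<le>M. Estar (r + m) u y)"
proof
  fix y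
  have "Estar (r + m) u y = (if m = layer y - r then u y else 0)" if "m \<le> M" for m
    using that assms(1,3) by (auto simp: dual_idem_apply)
  then have "(\<Sum>m\<le>M. Estar (r + m) u y) = (\<Sum>m\<le>M. if m = layer y - r then u y else 0)"
    by simp
  also have "\<dots> = u y"
  proof (cases "u y = 0")
    case False
    then have "layer y \<le> r + M" using assms(2) unfolding vanishes_above_def by (meson not_le)
    then have "layer y - r \<le> M" by arith
    then show ?thesis by simp
  qed simp
  finally show "u y = (\<Sum>m\<le>M. Estar (r + m) u y)" by simp
qed

lemma thin_Estar_multiple:
  assumes "thin R D x W" "i \<le> D" "u \<in> W" "Estar i u \<noteq> (\<lambda>_. 0)" "w \<in> W"
  obtains \<alpha> where "Estar i w = (\<lambda>y. \<alpha> * Estar i u y)"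
proof -
  obtain b where b: "\<forall>w\<in>W. \<exists>c. Estar i w = (\<lambda>y. c * b y)"
    using assms(1,2) unfolding thin_def by blast
  obtain cu cw where cu: "Estar i u = (\<lambda>y. cu * b y)" and cw: "Estar i w = (\<lambda>y. cw * b y)"
    using b assms(3,5) by blast
  have "cu \<noteq> 0" using assms(4) cu by auto
  then have "Estar i w = (\<lambda>y. cw / cu * Estar i u y)" unfolding cu cw by auto
  then show ?thesis by (rule that)
qed

end

text \<open>The raised vectors \<open>v\<^sub>m = E\<^sup>*\<^sub>r\<^sub>+\<^sub>m A\<^sub>1\<^sup>m v\<close> satisfy \<open>v\<^sub>m\<^sub>+\<^sub>1 = E\<^sup>*\<^sub>r\<^sub>+\<^sub>m\<^sub>+\<^sub>1 A\<^sub>1 v\<^sub>m\<close>; by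
  thinness each \<open>E\<^sup>*\<^sub>r\<^sub>+\<^sub>m W\<close> is spanned by \<open>v\<^sub>m\<close> as long as \<open>v\<^sub>m \<noteq> 0\<close>, so \<open>W\<close> ends where the \<open>v\<^sub>m\<close> vanish,
  and a triangular argument puts every \<open>v\<^sub>m\<close> into the span of the \<open>A\<^sub>1\<^sup>k v\<close>.\<close>

locale thin_irreducible_module = pointed_metric_scheme +
  fixes W :: "('a \<Rightarrow> complex) set" and v :: "'a \<Rightarrow> complex"
  assumes irreducible: "irreducible_T_module R D x W"
    and thin: "thin R D x W"
    and v_in: "v \<in> W"
    and v_nonzero: "v \<noteq> (\<lambda>_. 0)"
    and v_on_layer: "on_layer (endpoint R D x W) v"
begin

abbreviation r :: nat where "r \<equiv> endpoint R D x W"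

definition raised :: "nat \<Rightarrow> 'a \<Rightarrow> complex" where
  "raised m = Estar (r + m) (adj1_pow v m)"

definition height :: nat where
  "height = (LEAST k. r + k = D \<or> raised (Suc k) = (\<lambda>_. 0))"

lemma T_module_W: "T_module R D x W"
  by (rule irreducible_T_module_T_module[OF irreducible])

lemma r_le_D: "r \<le> D"
  by (rule endpoint_le_D[OF v_in v_nonzero])

lemma adj1_pow_vanishes_above: "vanishes_above (r + k) (adj1_pow v k)"
  using v_on_layer by (intro vanishes_above_adj1_pow) (auto simp: on_layer_def vanishes_above_def)

lemma raised_0: "raised 0 = v"
  unfolding raised_def using Estar_on_layer[OF r_le_D v_on_layer] by simp

lemma raised_Suc:
  assumes "r + Suc m \<le> D" shows "raised (Suc m) = Estar (r + Suc m) (mvmult (adj (R 1)) (raised m))"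
  unfolding raised_def adj1_pow_Suc add_Suc_right
  using Estar_Suc_adj1[OF adj1_pow_vanishes_above] assms by simp

lemma raised_in_W: "r + m \<le> D \<Longrightarrow> raised m \<in> W"
  unfolding raised_def
  by (intro T_module_mvmult[OF T_module_W] terwilliger_algebra.gen_Estar adj1_pow_in_T_module[OF T_module_W v_in])

lemma height_le: "r + height \<le> D"
proof -
  have "height \<le> D - r" unfolding height_def by (rule Least_le) (use r_le_D in simp)
  then show ?thesis using r_le_D by simp
qed

lemma raised_Suc_height: "r + height < D \<Longrightarrow> raised (Suc height) = (\<lambda>_. 0)"
  using LeastI[of "\<lambda>k. r + k = D \<or> raised (Suc k) = (\<lambda>_. 0)" "D - r"] r_le_D
  unfolding height_def by simp

lemma raised_nonzero: "m \<le> height \<Longrightarrow> raised m \<noteq> (\<lambda>_. 0)"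
proof (induction m)
  case 0 then show ?case using raised_0 v_nonzero by simp
next
  case (Suc m)
  then have "\<not> (r + m = D \<or> raised (Suc m) = (\<lambda>_. 0))"
    unfolding height_def by (intro not_less_Least) simp
  then show ?case by simp
qed

lemma Estar_multiple_raised:
  assumes "m \<le> height" "w \<in> W"
  obtains \<alpha> where "Estar (r + m) w = (\<lambda>y. \<alpha> * raised m y)"
proof -
  have m: "r + m \<le> D" using assms(1) height_le by simp
  have "Estar (r + m) (raised m) = raised m"
    unfolding raised_def by (rule Estar_on_layer[OF m on_layer_Estar[OF m]])
  then show ?thesis
    using thin_Estar_multiple[OF thin m raised_in_W[OF m] _ assms(2)] raised_nonzero[OF assms(1)] that
    by metis
qed

lemma adj1_vanishes_above_height:
  assumes u: "u \<in> W" "vanishes_above (r + height) u"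
  shows "vanishes_above (r + height) (mvmult (adj (R 1)) u)"
  unfolding vanishes_above_def
proof (intro allI impI)
  fix y assume y: "r + height < layer y"
  show "mvmult (adj (R 1)) u y = 0"
  proof (cases "layer y = Suc (r + height)")
    case True
    then have top: "Suc (r + height) \<le> D" using layer_le[of y] by simp
    obtain \<alpha> where \<alpha>: "Estar (r + height) u = (\<lambda>y. \<alpha> * raised height y)"
      using Estar_multiple_raised[OF le_refl u(1)] .
    have "Estar (Suc (r + height)) (mvmult (adj (R 1)) u) = (\<lambda>y. \<alpha> * raised (Suc height) y)"
      using raised_Suc[of height] top
      unfolding Estar_Suc_adj1[OF u(2) top] \<alpha> by (simp add: mvmult_scale_right)
    then have "Estar (Suc (r + height)) (mvmult (adj (R 1)) u) y = 0"
      using raised_Suc_height top by simp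
    then show ?thesis using True top by (simp add: dual_idem_apply)
  next
    case False
    then show ?thesis using vanishes_above_adj1[OF u(2)] y unfolding vanishes_above_def by simp
  qed
qed

lemma vanishes_above_height: "w \<in> W \<Longrightarrow> vanishes_above (r + height) w"
proof -
  define W' where "W' = {w \<in> W. vanishes_above (r + height) w}"
  have "T_module R D x W'"
  proof (rule T_moduleI)
    show "csubspace W'"
      using T_module_csubspace[OF T_module_W]
      unfolding W'_def csubspace_def vanishes_above_def by auto
  next
    fix i u assume "i \<le> D" "u \<in> W'"
    then show "Estar i u \<in> W'"
      unfolding W'_def vanishes_above_def
      by (auto simp: dual_idem_apply T_module_mvmult[OF T_module_W terwilliger_algebra.gen_Estar])
  next
    fix u assume "u \<in> W'"
    then show "mvmult (adj (R 1)) u \<in> W'"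
      using T_module_mvmult[OF T_module_W terwilliger_algebra.gen_A[OF diameter_pos]]
        adj1_vanishes_above_height
      unfolding W'_def by blast
  qed
  moreover have "v \<in> W'"
    using v_in v_on_layer unfolding W'_def on_layer_def vanishes_above_def by auto
  ultimately have "W' = W"
    by (intro irreducible_T_module_eq[OF irreducible _ _ _ v_nonzero]) (auto simp: W'_def)
  then show "w \<in> W \<Longrightarrow> vanishes_above (r + height) w" unfolding W'_def by blast
qed

lemma raised_in_cspan: "m \<le> height \<Longrightarrow> raised m \<in> cspan {..D} (adj1_pow v)"
proof (induction m rule: less_induct)
  case (less m)
  let ?S = "cspan {..D} (adj1_pow v)"
  have m: "r + m \<le> D" using less.prems height_le by simp
  have "adj1_pow v m = (\<lambda>y. \<Sum>k\<le>m. Estar (r + k) (adj1_pow v m) y)"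
    using vanishes_below_endpoint[OF adj1_pow_in_T_module[OF T_module_W v_in]]
    by (intro layer_decomp[OF _ adj1_pow_vanishes_above m]) blast
  then have "raised m = (\<lambda>y. adj1_pow v m y - (\<Sum>k<m. Estar (r + k) (adj1_pow v m) y))"
    unfolding raised_def by (simp add: lessThan_Suc_atMost[symmetric] fun_eq_iff)
  also have "\<dots> \<in> ?S"
  proof (intro csubspace_diff[OF csubspace_cspan] csubspace_sum[OF csubspace_cspan])
    show "adj1_pow v m \<in> ?S" using m by (intro cspan_mem) auto
  next
    fix k assume "k \<in> {..<m}"
    then have k: "k < m" "k \<le> height" using less.prems by auto
    obtain \<alpha> where "Estar (r + k) (adj1_pow v m) = (\<lambda>y. \<alpha> * raised k y)"
      using Estar_multiple_raised[OF k(2) adj1_pow_in_T_module[OF T_module_W v_in]] .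
    then show "Estar (r + k) (adj1_pow v m) \<in> ?S"
      using csubspace_scale[OF csubspace_cspan less.IH[OF k]] by simp
  qed simp
  finally show ?case .
qed

lemma W_subset_cspan: "W \<subseteq> cspan {..D} (adj1_pow v)"
proof
  fix w assume w: "w \<in> W"
  have "w = (\<lambda>y. \<Sum>m\<le>height. Estar (r + m) w y)"
    using vanishes_below_endpoint[OF w] height_le
    by (intro layer_decomp[OF _ vanishes_above_height[OF w]]) auto
  also have "\<dots> \<in> cspan {..D} (adj1_pow v)"
  proof (intro csubspace_sum[OF csubspace_cspan])
    fix m assume "m \<in> {..height}"
    then obtain \<alpha> where "Estar (r + m) w = (\<lambda>y. \<alpha> * raised m y)"
      using Estar_multiple_raised[OF _ w] by auto
    then show "Estar (r + m) w \<in> cspan {..D} (adj1_pow v)"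
      using csubspace_scale[OF csubspace_cspan raised_in_cspan] \<open>m \<in> {..height}\<close> by simp
  qed simp
  finally show "w \<in> cspan {..D} (adj1_pow v)" .
qed

end

context pointed_metric_scheme
begin

lemma orthogonal_of_thin_codesign:
  assumes codesign: "\<forall>l\<le>D. relative_codesign R x t (mvmult (adj (R l)) chi)"
    and W: "irreducible_T_module R D x W" "thin R D x W"
    and ep: "1 \<le> endpoint R D x W" "endpoint R D x W \<le> t"
  shows "orthogonal_to chi W"
proof -
  let ?r = "endpoint R D x W"
  obtain v where v: "v \<in> W" "v \<noteq> (\<lambda>_. 0)" "on_layer ?r v" and rD: "?r \<le> D"
    using endpoint_vector[OF W(1)] .
  interpret thin_irreducible_module R D x W v
    using W v by unfold_locales
  have "cinner v (layer_char ?r) = 0"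
    using cinner_layer_char_eq_0[OF T_module_W _ v(1) rD] vanishes_at_base[OF _ ep(1)] by blast
  then have "cinner (adj1_pow v k) chi = 0" for k
    by (rule cinner_adj1_pow_eq_0[OF codesign ep rD v(3)])
  then have "cspan {..D} (adj1_pow v) \<subseteq> {u. cinner u chi = 0}"
    by (intro cspan_subset csubspace_cinner_left_eq_0) auto
  then show ?thesis using W_subset_cspan unfolding orthogonal_to_iff by blast
qed

end

theorem lemma3p4:
  fixes R :: "nat \<Rightarrow> ('a::finite \<times> 'a) set" and D t :: nat and x :: 'a
    and chi :: "'a \<Rightarrow> complex"
  assumes "symmetric_association_scheme R D"
    and "metric_scheme R D"
    and "1 \<le> t" and "t \<le> D"
  shows "((\<forall>W. irreducible_T_module R D x W \<and> 1 \<le> endpoint R D x W \<and> endpoint R D x W \<le> t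
               \<longrightarrow> orthogonal_to chi W)
          \<longleftrightarrow> (\<forall>F\<in>terwilliger_algebra R D x. relative_codesign R x t (mvmult F chi)))
       \<and> ((\<forall>W. irreducible_T_module R D x W \<and> endpoint R D x W \<le> t \<longrightarrow> thin R D x W)
          \<longrightarrow> (\<forall>l\<le>D. relative_codesign R x t (mvmult (adj (R l)) chi))
          \<longrightarrow> (\<forall>W. irreducible_T_module R D x W \<and> 1 \<le> endpoint R D x W \<and> endpoint R D x W \<le> t
               \<longrightarrow> orthogonal_to chi W))"
proof -
  interpret pointed_metric_scheme R D x
    using assms by unfold_locales simp_all
  show ?thesis
    using codesign_of_orthogonal[OF _ assms(4)] orthogonal_of_codesign
      orthogonal_of_thin_codesign
    by blast
qed

end
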